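(* With the notation of the context, for every $\varepsilon>0$, \[ w_0-\mathfrak r(\varepsilon)^2\le w_\varepsilon\le w_0\qquad\text{in }U.\]
   Context: Let $U\subset\mathbb{R}^n$ be a smooth bounded domain, and let $\varphi_0\in C^2(U)\cap C(\overline U)$ be positive somewhere in $U$, negative on $\partial U$, and satisfy $\lambda\le-\Delta\varphi_0\le\lambda^{-1}$ in $U$ for some $\lambda\in(0,1]$. Let $\psi:\mathbb{R}^n\to\mathbb{R}$ be a smooth $\mathbb{Z}^n$-periodic function with $-1\le\psi\le0$, and let $p\in\mathbb{R}$. For $\varepsilon>0$ set $\varphi_\varepsilon(x)=\varphi_0(x)+\varepsilon^p\psi(x/\varepsilon)$. Let $u_0$ be the least function $v$ with $\Delta v\le0$ in $U$, $v\ge\varphi_0$ in $U$, $v\ge0$ on $\partial U$; let $u_\varepsilon$ be the least function $v$ with $\Delta v\le 0$ in $U$, $v\ge\varphi_\varepsilon$ in $U$, $v\ge0$ on $\partial U$. Set $w_0=u_0-\varphi_0$, $w_\varepsilon=u_\varepsilon-\varphi_0$. For $\mu>0$, let $\chi_\mu$ be the least $\mathbb{Z}^n$-periodic function $v$ on $\mathbb{R}^n$ with $\Delta v\le\mu$ in $\mathbb{R}^n$ and $v\ge\psi$ in $\mathbb{R}^n$, and $\mathcal E(\mu)=-\inf\chi_\mu$. Define $\mathfrak r(\varepsilon)=\big(\varepsilon^p\,\mathcal E(\lambda^{-1}\varepsilon^{2-p})\big)^{1/2}$. *)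

theory Defs
  imports "HOL-Analysis.Analysis"
begin

fun dd :: "'a::euclidean_space list \<Rightarrow> ('a \<Rightarrow> real) \<Rightarrow> 'a \<Rightarrow> real" where
  "dd [] f = f"
| "dd (v # vs) f = (\<lambda>x. deriv (\<lambda>t. dd vs f (x + t *\<^sub>R v)) 0)"

definition Ck_on :: "nat \<Rightarrow> 'a::euclidean_space set \<Rightarrow> ('a \<Rightarrow> real) \<Rightarrow> bool" where
  "Ck_on k S f \<longleftrightarrow>
     (\<forall>vs. set vs \<subseteq> Basis \<and> length vs \<le> k \<longrightarrow>
        continuous_on S (dd vs f) \<and>
        (length vs < k \<longrightarrow>
           (\<forall>v\<in>Basis. \<forall>x\<in>S. (\<lambda>t. dd vs f (x + t *\<^sub>R v)) differentiable (at 0))))"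

definition smooth_on :: "'a::euclidean_space set \<Rightarrow> ('a \<Rightarrow> real) \<Rightarrow> bool" where
  "smooth_on S f \<longleftrightarrow> (\<forall>k. Ck_on k S f)"

definition laplacian :: "('a::euclidean_space \<Rightarrow> real) \<Rightarrow> 'a \<Rightarrow> real" where
  "laplacian f x = (\<Sum>v\<in>Basis. dd [v, v] f x)"

definition smooth_bounded_domain :: "'a::euclidean_space set \<Rightarrow> bool" where
  "smooth_bounded_domain U \<longleftrightarrow> open U \<and> connected U \<and> bounded U \<and> U \<noteq> {} \<and>
     (\<exists>\<rho>. smooth_on UNIV \<rho> \<and> U = {x. \<rho> x < 0} \<and>
          (\<forall>x. \<rho> x = 0 \<longrightarrow> (\<exists>v\<in>Basis. dd [v] \<rho> x \<noteq> 0)))"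

text \<open>Viscosity sense of "\<Delta>v \<le> c in S" (S open): whenever a C^2 function touches
  v from below at x0, its Laplacian at x0 is \<le> c.\<close>
definition visc_super :: "'a::euclidean_space set \<Rightarrow> real \<Rightarrow> ('a \<Rightarrow> real) \<Rightarrow> bool" where
  "visc_super S c v \<longleftrightarrow>
     (\<forall>x0\<in>S. \<forall>\<phi> r. r > 0 \<longrightarrow> ball x0 r \<subseteq> S \<longrightarrow> Ck_on 2 (ball x0 r) \<phi> \<longrightarrow>
        \<phi> x0 = v x0 \<longrightarrow> (\<forall>y\<in>ball x0 r. \<phi> y \<le> v y) \<longrightarrow> laplacian \<phi> x0 \<le> c)"

definition obst_adm :: "'a::euclidean_space set \<Rightarrow> ('a \<Rightarrow> real) \<Rightarrow> ('a \<Rightarrow> real) \<Rightarrow> bool" where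
  "obst_adm U g v \<longleftrightarrow> continuous_on (closure U) v \<and> visc_super U 0 v \<and>
     (\<forall>x\<in>U. g x \<le> v x) \<and> (\<forall>x\<in>frontier U. 0 \<le> v x)"

definition least_obst :: "'a::euclidean_space set \<Rightarrow> ('a \<Rightarrow> real) \<Rightarrow> ('a \<Rightarrow> real) \<Rightarrow> bool" where
  "least_obst U g v \<longleftrightarrow> obst_adm U g v \<and>
     (\<forall>w. obst_adm U g w \<longrightarrow> (\<forall>x\<in>closure U. v x \<le> w x))"

definition Zn_periodic :: "('a::euclidean_space \<Rightarrow> real) \<Rightarrow> bool" where
  "Zn_periodic f \<longleftrightarrow> (\<forall>x. \<forall>k\<in>Basis. f (x + k) = f x)"

definition cell_adm :: "real \<Rightarrow> ('a::euclidean_space \<Rightarrow> real) \<Rightarrow> ('a \<Rightarrow> real) \<Rightarrow> bool" where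
  "cell_adm \<mu> \<psi> v \<longleftrightarrow> Zn_periodic v \<and> continuous_on UNIV v \<and> visc_super UNIV \<mu> v \<and>
     (\<forall>x. \<psi> x \<le> v x)"

definition least_cell :: "real \<Rightarrow> ('a::euclidean_space \<Rightarrow> real) \<Rightarrow> ('a \<Rightarrow> real) \<Rightarrow> bool" where
  "least_cell \<mu> \<psi> v \<longleftrightarrow> cell_adm \<mu> \<psi> v \<and> (\<forall>w. cell_adm \<mu> \<psi> w \<longrightarrow> (\<forall>x. v x \<le> w x))"

end

theory Submission
  imports Defs
begin

text \<open>The upper bound holds because \<open>\<psi> \<le> 0\<close> only lowers the obstacle. For the lower bound
  put \<open>c = \<epsilon>\<^sup>p\<close> and \<open>\<mu> = \<epsilon>\<^sup>2 / (\<lambda> c)\<close>. Let \<open>D\<close> be the gap \<open>(u\<^sub>\<epsilon> - \<phi>0) / c\<close> truncated at \<open>0\<close>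
  and extended by \<open>0\<close> outside \<open>U\<close>, and \<open>I y = inf {D (\<epsilon> (y + k)) | k \<in> \<int>\<^sup>n}\<close>, a periodic function.
  Where \<open>I\<close> is negative the infimum is attained at a point of \<open>U\<close>, and a test function
  touching \<open>I\<close> from below there becomes, after rescaling, a test function touching \<open>u\<^sub>\<epsilon>\<close>;
  since \<open>-\<Delta>\<phi>0 \<le> 1/\<lambda>\<close>, this makes \<open>min \<chi>\<^sub>\<mu> I\<close> admissible for the cell problem. Minimality of
  \<open>\<chi>\<^sub>\<mu>\<close> gives \<open>c \<chi>\<^sub>\<mu> (x/\<epsilon>) \<le> u\<^sub>\<epsilon> - \<phi>0\<close>, so \<open>u\<^sub>\<epsilon> + c E(\<mu>)\<close>, with \<open>c E(\<mu>) = r(\<epsilon>)\<^sup>2\<close>, is admissible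
  for the unperturbed problem and dominates \<open>u0\<close>.\<close>

lemma dd_const: "dd vs (\<lambda>_. c) = (\<lambda>_. if vs = [] then c else 0)"
  by (induction vs) (auto intro!: ext)

lemma Ck_on_const: "Ck_on k S (\<lambda>_. c)"
  unfolding Ck_on_def dd_const by auto

lemma Ck_on_subset: "Ck_on k S f \<Longrightarrow> T \<subseteq> S \<Longrightarrow> Ck_on k T f"
  unfolding Ck_on_def by (meson continuous_on_subset subsetD)

lemma Ck_onD_differentiable:
  "Ck_on k S f \<Longrightarrow> set vs \<subseteq> Basis \<Longrightarrow> length vs < k \<Longrightarrow> v \<in> Basis \<Longrightarrow> x \<in> S
    \<Longrightarrow> (\<lambda>t. dd vs f (x + t *\<^sub>R v)) differentiable (at 0)"
  unfolding Ck_on_def by auto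

lemma has_field_derivative_dd_affine_comb:
  fixes f g :: "'a::euclidean_space \<Rightarrow> real"
  assumes S: "open S" and f: "Ck_on k S f" and g: "Ck_on k T g"
    and ST: "\<And>x. x \<in> S \<Longrightarrow> a *\<^sub>R x + b \<in> T"
    and vs: "set vs \<subseteq> Basis" "length vs < k" and v: "v \<in> Basis" and x: "x \<in> S"
    and IH: "\<forall>y\<in>S. dd vs F y = dd vs f y + c * a ^ length vs * dd vs g (a *\<^sub>R y + b)"
  shows "((\<lambda>t. dd vs F (x + t *\<^sub>R v)) has_field_derivative
      (dd (v#vs) f x + c * a ^ length (v#vs) * dd (v#vs) g (a *\<^sub>R x + b))) (at 0)"
proof -
  define Sx where "Sx = (\<lambda>t. x + t *\<^sub>R v) -` S"
  have "open Sx" unfolding Sx_def by (rule open_vimage[OF S]) (intro continuous_intros)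
  have "0 \<in> Sx" using x by (simp add: Sx_def)
  have Df: "((\<lambda>t. dd vs f (x + t *\<^sub>R v)) has_field_derivative dd (v#vs) f x) (at 0)"
    using Ck_onD_differentiable[OF f vs v x] by (simp add: DERIV_deriv_iff_real_differentiable)
  have "((\<lambda>t. dd vs g ((a *\<^sub>R x + b) + t *\<^sub>R v)) has_field_derivative dd (v#vs) g (a *\<^sub>R x + b))
      (at (a * 0))" (is "(?G has_field_derivative _) _")
    using Ck_onD_differentiable[OF g vs v ST[OF x]] by (simp add: DERIV_deriv_iff_real_differentiable)
  then have Dg: "((\<lambda>t. dd vs g ((a *\<^sub>R x + b) + (a * t) *\<^sub>R v)) has_field_derivative
      dd (v#vs) g (a *\<^sub>R x + b) * a) (at 0)"
    using DERIV_chain2[where g="\<lambda>t. a * t" and x=0, of ?G] by (auto intro!: derivative_eq_intros)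
  show ?thesis
  proof (rule has_field_derivative_transform_within_open[OF _ \<open>open Sx\<close> \<open>0 \<in> Sx\<close>])
    show "((\<lambda>t. dd vs f (x + t *\<^sub>R v) + c * a ^ length vs * dd vs g ((a *\<^sub>R x + b) + (a * t) *\<^sub>R v))
      has_field_derivative (dd (v#vs) f x + c * a ^ length (v#vs) * dd (v#vs) g (a *\<^sub>R x + b))) (at 0)"
      using DERIV_add[OF Df DERIV_cmult[OF Dg, of "c * a ^ length vs"]] by (simp add: algebra_simps)
  next
    fix t assume "t \<in> Sx"
    moreover have "a *\<^sub>R (x + t *\<^sub>R v) + b = (a *\<^sub>R x + b) + (a * t) *\<^sub>R v"
      by (simp add: algebra_simps)
    ultimately show "dd vs f (x + t *\<^sub>R v) + c * a ^ length vs * dd vs g ((a *\<^sub>R x + b) + (a * t) *\<^sub>R v)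
        = dd vs F (x + t *\<^sub>R v)" using IH by (metis Sx_def vimage_eq)
  qed
qed

lemma dd_affine_comb:
  fixes f g :: "'a::euclidean_space \<Rightarrow> real"
  assumes S: "open S" and f: "Ck_on k S f" and g: "Ck_on k T g"
    and ST: "\<And>x. x \<in> S \<Longrightarrow> a *\<^sub>R x + b \<in> T"
    and vs: "set vs \<subseteq> Basis" "length vs \<le> k" and y: "y \<in> S"
  shows "dd vs (\<lambda>x. f x + c * g (a *\<^sub>R x + b)) y = dd vs f y + c * a ^ length vs * dd vs g (a *\<^sub>R y + b)"
  using vs y
proof (induction vs arbitrary: y)
  case (Cons v vs)
  have "dd (v#vs) (\<lambda>x. f x + c * g (a *\<^sub>R x + b)) y
      = deriv (\<lambda>t. dd vs (\<lambda>x. f x + c * g (a *\<^sub>R x + b)) (y + t *\<^sub>R v)) 0" by simp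
  also have "\<dots> = dd (v#vs) f y + c * a ^ length (v#vs) * dd (v#vs) g (a *\<^sub>R y + b)"
    by (rule DERIV_imp_deriv, rule has_field_derivative_dd_affine_comb[OF S f g ST])
      (use Cons in auto)
  finally show ?case .
qed simp

lemma Ck_on_affine_comb:
  fixes f g :: "'a::euclidean_space \<Rightarrow> real"
  assumes S: "open S" and f: "Ck_on k S f" and g: "Ck_on k T g"
    and ST: "\<And>x. x \<in> S \<Longrightarrow> a *\<^sub>R x + b \<in> T"
  shows "Ck_on k S (\<lambda>x. f x + c * g (a *\<^sub>R x + b))"
  unfolding Ck_on_def
proof (intro allI impI conjI ballI)
  fix vs :: "'a list" assume vs: "set vs \<subseteq> Basis \<and> length vs \<le> k"
  note eq = dd_affine_comb[OF S f g ST, of vs _ c]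
  have "continuous_on S (dd vs f)" "continuous_on T (dd vs g)"
    using f g vs by (auto simp: Ck_on_def)
  then have "continuous_on S (\<lambda>y. dd vs f y + c * a ^ length vs * dd vs g (a *\<^sub>R y + b))"
    by (auto intro!: continuous_intros continuous_on_compose2[of T "dd vs g"] ST)
  then show "continuous_on S (dd vs (\<lambda>x. f x + c * g (a *\<^sub>R x + b)))"
    by (rule continuous_on_cong[THEN iffD1, rotated -1]) (use eq vs in auto)
  fix v x :: 'a assume "length vs < k" "v \<in> Basis" "x \<in> S"
  then show "(\<lambda>t. dd vs (\<lambda>x. f x + c * g (a *\<^sub>R x + b)) (x + t *\<^sub>R v)) differentiable (at 0)"
    using has_field_derivative_dd_affine_comb[OF S f g ST] eq vs real_differentiable_def by blast
qed

lemma laplacian_affine_comb: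
  fixes f g :: "'a::euclidean_space \<Rightarrow> real"
  assumes S: "open S" and f: "Ck_on 2 S f" and g: "Ck_on 2 T g"
    and ST: "\<And>x. x \<in> S \<Longrightarrow> a *\<^sub>R x + b \<in> T" and y: "y \<in> S"
  shows "laplacian (\<lambda>x. f x + c * g (a *\<^sub>R x + b)) y
    = laplacian f y + c * a\<^sup>2 * laplacian g (a *\<^sub>R y + b)"
  using dd_affine_comb[OF S f g ST, of "[v,v]" y c for v] y
  unfolding laplacian_def by (simp add: sum.distrib sum_distrib_left power2_eq_square del: dd.simps)

lemma dd2_nonpos_at_local_max:
  fixes \<phi> :: "'a::euclidean_space \<Rightarrow> real"
  assumes C: "Ck_on 2 (ball x0 r) \<phi>" and r: "r > 0" and max: "\<forall>y\<in>ball x0 r. \<phi> y \<le> \<phi> x0"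
    and v: "v \<in> Basis"
  shows "dd [v,v] \<phi> x0 \<le> 0"
proof (rule ccontr)
  assume "\<not> dd [v,v] \<phi> x0 \<le> 0"
  then have pos: "dd [v,v] \<phi> x0 > 0" by simp
  define h where "h t = \<phi> (x0 + t *\<^sub>R v)" for t
  define g where "g t = dd [v] \<phi> (x0 + t *\<^sub>R v)" for t
  have line: "x0 + t *\<^sub>R v \<in> ball x0 r" if "\<bar>t\<bar> < r" for t
    using that v by (simp add: dist_norm)
  have h': "(h has_field_derivative g t) (at t)" if "\<bar>t\<bar> < r" for t
  proof -
    have "((\<lambda>s. \<phi> ((x0 + t *\<^sub>R v) + s *\<^sub>R v)) has_field_derivative g t) (at 0)"
      using Ck_onD_differentiable[OF C, of "[]" v] v line[OF that]
      by (simp add: g_def DERIV_deriv_iff_real_differentiable)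
    moreover have "(\<lambda>s. \<phi> ((x0 + t *\<^sub>R v) + s *\<^sub>R v)) = (\<lambda>s. h (s + t))"
      by (auto simp: h_def algebra_simps)
    ultimately show ?thesis using DERIV_shift[of h "g t" 0 t] by simp
  qed
  have g': "(g has_field_derivative dd [v,v] \<phi> x0) (at 0)"
    using Ck_onD_differentiable[OF C, of "[v]" v x0] v r
    unfolding g_def dd.simps(2)[of v "[v]"] by (simp add: DERIV_deriv_iff_real_differentiable)
  have "g 0 = 0"
    by (rule DERIV_local_max[OF h'[of 0] r]) (use r max line in \<open>auto simp: h_def\<close>)
  moreover obtain d where d: "d > 0" "\<forall>t>0. t < d \<longrightarrow> g 0 < g (0 + t)"
    using DERIV_pos_inc_right[OF g' pos] by blast
  define t where "t = min d r / 2"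
  have t: "0 < t" "t < d" "t < r" using d r by (auto simp: t_def)
  obtain z where z: "0 < z" "z < t" "h t - h 0 = (t - 0) * g z"
    using MVT2[OF t(1), of h g] h' t by force
  ultimately have "h t - h 0 > 0" using d t by simp
  moreover have "h t \<le> h 0" using max line[of t] t by (simp add: h_def)
  ultimately show False by simp
qed

lemma laplacian_nonpos_at_local_max:
  fixes \<phi> :: "'a::euclidean_space \<Rightarrow> real"
  assumes "Ck_on 2 (ball x0 r) \<phi>" and "r > 0" and "\<forall>y\<in>ball x0 r. \<phi> y \<le> \<phi> x0"
  shows "laplacian \<phi> x0 \<le> 0"
  unfolding laplacian_def by (rule sum_nonpos) (use dd2_nonpos_at_local_max[OF assms] in blast)

lemma visc_super_const:
  assumes "0 \<le> c" shows "visc_super S c (\<lambda>_. C)"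
  unfolding visc_super_def
proof (intro ballI allI impI)
  fix x0 \<phi> r assume "0 < r" "Ck_on 2 (ball x0 r) \<phi>" "\<phi> x0 = C" "\<forall>y\<in>ball x0 r. \<phi> y \<le> C"
  then have "laplacian \<phi> x0 \<le> 0" by (intro laplacian_nonpos_at_local_max) auto
  with assms show "laplacian \<phi> x0 \<le> c" by simp
qed

lemma visc_super_add_const:
  assumes u: "visc_super S c u"
  shows "visc_super S c (\<lambda>x. u x + C)"
  unfolding visc_super_def
proof (intro ballI allI impI)
  fix x0 \<phi> r assume x0: "x0 \<in> S" and r: "0 < r" and rS: "ball x0 r \<subseteq> S"
    and C: "Ck_on 2 (ball x0 r) \<phi>" and eq: "\<phi> x0 = u x0 + C"
    and le: "\<forall>y\<in>ball x0 r. \<phi> y \<le> u y + C"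
  define \<phi>' where "\<phi>' = (\<lambda>x. \<phi> x - C)"
  have \<phi>'_comb: "\<phi>' = (\<lambda>x. \<phi> x + (- C) * (\<lambda>_. 1) (1 *\<^sub>R x + 0))"
    by (simp add: \<phi>'_def)
  have "Ck_on 2 (ball x0 r) \<phi>'"
    unfolding \<phi>'_comb by (rule Ck_on_affine_comb[OF open_ball C Ck_on_const[of 2 UNIV 1]]) simp
  moreover have "\<phi>' x0 = u x0" "\<forall>y\<in>ball x0 r. \<phi>' y \<le> u y"
    using eq le by (auto simp: \<phi>'_def)
  ultimately have "laplacian \<phi>' x0 \<le> c" using u x0 r rS unfolding visc_super_def by blast
  moreover have "laplacian \<phi>' x0 = laplacian \<phi> x0"
    using laplacian_affine_comb[OF open_ball C Ck_on_const[of 2 UNIV 1], where a=1 and b=0 and c="-C" and y=x0] r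
    by (simp add: \<phi>'_comb laplacian_def dd_const)
  ultimately show "laplacian \<phi> x0 \<le> c" by simp
qed

lemma visc_super_min:
  assumes f: "visc_super S c f"
    and g: "\<And>x0 \<phi> r. x0 \<in> S \<Longrightarrow> g x0 < f x0 \<Longrightarrow> 0 < r \<Longrightarrow> ball x0 r \<subseteq> S \<Longrightarrow>
      Ck_on 2 (ball x0 r) \<phi> \<Longrightarrow> \<phi> x0 = g x0 \<Longrightarrow> \<forall>y\<in>ball x0 r. \<phi> y \<le> g y \<Longrightarrow> laplacian \<phi> x0 \<le> c"
  shows "visc_super S c (\<lambda>x. min (f x) (g x))"
  unfolding visc_super_def
proof (intro ballI allI impI)
  fix x0 \<phi> r assume x0: "x0 \<in> S" and r: "0 < r" "ball x0 r \<subseteq> S" and C: "Ck_on 2 (ball x0 r) \<phi>"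
    and eq: "\<phi> x0 = min (f x0) (g x0)" and le: "\<forall>y\<in>ball x0 r. \<phi> y \<le> min (f y) (g y)"
  show "laplacian \<phi> x0 \<le> c"
  proof (cases "f x0 \<le> g x0")
    case True
    then show ?thesis using f x0 r C eq le unfolding visc_super_def by auto
  next
    case False
    then show ?thesis using g[OF x0 _ r C] eq le by auto
  qed
qed

inductive_set Basis_lattice :: "'a::euclidean_space set" where
  zero: "0 \<in> Basis_lattice"
| add_Basis: "k \<in> Basis_lattice \<Longrightarrow> b \<in> Basis \<Longrightarrow> k + b \<in> Basis_lattice"
| diff_Basis: "k \<in> Basis_lattice \<Longrightarrow> b \<in> Basis \<Longrightarrow> k - b \<in> Basis_lattice"

lemma Zn_periodic_Basis_lattice:
  assumes per: "Zn_periodic f" and k: "k \<in> Basis_lattice"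
  shows "f (x + k) = f x"
  using k
proof (induction k arbitrary: x)
  case (add_Basis k b)
  have "f (x + (k + b)) = f (x + k)"
    using per add_Basis.hyps(2) by (simp add: Zn_periodic_def flip: add.assoc)
  then show ?case using add_Basis.IH by simp
next
  case (diff_Basis k b)
  have "f (x + k) = f (x + (k - b))"
    using per diff_Basis.hyps(2) unfolding Zn_periodic_def by (metis add.assoc diff_add_cancel)
  then show ?case using diff_Basis.IH by simp
qed simp

lemma Basis_lattice_translate:
  assumes b: "b \<in> Basis" shows "(+) b ` Basis_lattice = (Basis_lattice :: 'a::euclidean_space set)"
proof
  show "(+) b ` Basis_lattice \<subseteq> Basis_lattice"
    using Basis_lattice.add_Basis[OF _ b] by (auto simp: add.commute)
  show "Basis_lattice \<subseteq> (+) b ` Basis_lattice"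
  proof
    fix k :: 'a assume "k \<in> Basis_lattice"
    then have "k - b \<in> Basis_lattice" using Basis_lattice.diff_Basis b by blast
    then show "k \<in> (+) b ` Basis_lattice" by (rule image_eqI[rotated]) simp
  qed
qed

lemma Basis_lattice_inner_Ints: "k \<in> Basis_lattice \<Longrightarrow> c \<in> Basis \<Longrightarrow> k \<bullet> c \<in> \<int>"
  by (induction k rule: Basis_lattice.induct) (auto simp: inner_add_left inner_diff_left inner_Basis)

lemma finite_Basis_lattice_bounded: "finite {k \<in> (Basis_lattice :: 'a::euclidean_space set). norm k \<le> R}"
proof -
  let ?A = "{k \<in> (Basis_lattice :: 'a set). norm k \<le> R}"
  let ?coords = "\<lambda>k::'a. restrict (\<lambda>b. k \<bullet> b) Basis"
  have "inj_on ?coords ?A"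
    by (rule inj_onI, rule euclidean_eqI) (metis restrict_apply')
  moreover have "?coords ` ?A \<subseteq> PiE Basis (\<lambda>_. {x \<in> \<int>. \<bar>x\<bar> \<le> R})"
    using Basis_lattice_inner_Ints Basis_le_norm order_trans by fastforce
  then have "finite (?coords ` ?A)"
    by (rule finite_subset) (intro finite_PiE finite_Basis finite_abs_int_segment)
  ultimately show ?thesis using finite_imageD by blast
qed

lemma uniformly_continuous_on_bounded_support:
  fixes D :: "'a::euclidean_space \<Rightarrow> real"
  assumes cont: "continuous_on UNIV D" and supp: "\<forall>x. R \<le> norm x \<longrightarrow> D x = 0"
  shows "uniformly_continuous_on UNIV D"
  unfolding uniformly_continuous_on_def
proof (intro allI impI)
  fix e :: real assume e: "e > 0"
  have "uniformly_continuous_on (cball 0 (R + 1)) D"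
    by (rule compact_uniformly_continuous) (auto intro: continuous_on_subset[OF cont])
  then obtain d where d: "d > 0"
    "\<forall>x\<in>cball 0 (R + 1). \<forall>x'\<in>cball 0 (R + 1). dist x' x < d \<longrightarrow> dist (D x') (D x) < e"
    using e unfolding uniformly_continuous_on_def by blast
  show "\<exists>d>0. \<forall>x\<in>UNIV. \<forall>x'\<in>UNIV. dist x' x < d \<longrightarrow> dist (D x') (D x) < e"
  proof (intro exI[of _ "min d 1"] conjI ballI impI)
    fix x x' :: 'a assume close: "dist x' x < min d 1"
    have "norm x \<le> norm x' + dist x' x" "norm x' \<le> norm x + dist x' x"
      using norm_triangle_sub[of x x'] norm_triangle_sub[of x' x]
      by (auto simp: dist_norm norm_minus_commute)
    then consider "norm x \<le> R + 1" "norm x' \<le> R + 1" | "R \<le> norm x" "R \<le> norm x'"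
      using close by linarith
    then show "dist (D x') (D x) < e"
      by cases (use d close supp e in auto)
  qed (use d in auto)
qed

definition min0_zero_ext :: "'a set \<Rightarrow> ('a \<Rightarrow> real) \<Rightarrow> 'a \<Rightarrow> real" where
  "min0_zero_ext U g x = (if x \<in> U then min 0 (g x) else 0)"

lemma continuous_on_min0_zero_ext:
  fixes U :: "'a::metric_space set"
  assumes U: "open U" and g: "continuous_on (closure U) g" and bdry: "\<forall>x\<in>frontier U. 0 < g x"
  shows "continuous_on UNIV (min0_zero_ext U g)"
proof (intro continuous_at_imp_continuous_on ballI)
  fix x :: 'a
  let ?D = "min0_zero_ext U g"
  have zero_near: "isCont ?D x" if "eventually (\<lambda>y. y \<in> U \<longrightarrow> 0 < g y) (nhds x)"
  proof -
    have "eventually (\<lambda>y. ?D y = 0) (nhds x)"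
      using that by eventually_elim (auto simp: min0_zero_ext_def)
    then show ?thesis using isCont_cong[of ?D "\<lambda>_. 0"] by auto
  qed
  consider "x \<in> U" | "x \<notin> closure U" | "x \<in> frontier U"
    using U by (auto simp: frontier_def interior_open)
  then show "isCont ?D x"
  proof cases
    case 1
    have "eventually (\<lambda>y. ?D y = min 0 (g y)) (nhds x)"
      using eventually_nhds_in_open[OF U 1] by eventually_elim (simp add: min0_zero_ext_def)
    moreover have "isCont (\<lambda>y. min 0 (g y)) x"
      using continuous_on_interior[OF continuous_on_subset[OF g closure_subset], of x] 1 U
      by (auto simp: interior_open intro!: continuous_intros)
    ultimately show ?thesis by (rule isCont_cong[THEN iffD2])
  next
    case 2
    have "eventually (\<lambda>y. y \<in> - closure U) (nhds x)"
      by (rule eventually_nhds_in_open) (use 2 in auto)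
    then show ?thesis
      by (intro zero_near) (auto elim!: eventually_mono dest: subsetD[OF closure_subset])
  next
    case 3
    then have "x \<in> closure U" "0 < g x" using bdry by (auto simp: frontier_def)
    then obtain d where d: "d > 0" "\<forall>y\<in>closure U. dist y x < d \<longrightarrow> dist (g y) (g x) < g x"
      using g unfolding continuous_on_iff by blast
    have "eventually (\<lambda>y. dist y x < d) (nhds x)"
      using eventually_nhds_in_open[OF open_ball, of x x d] d by (simp add: dist_commute)
    then show ?thesis
      by (intro zero_near) (auto elim!: eventually_mono dest!: d(2)[rule_format, OF closure_subset[THEN subsetD]]
          simp: dist_real_def)
  qed
qed

definition lattice_inf :: "real \<Rightarrow> ('a::euclidean_space \<Rightarrow> real) \<Rightarrow> 'a \<Rightarrow> real" where
  "lattice_inf \<epsilon> D y = Inf ((\<lambda>k. D (\<epsilon> *\<^sub>R (y + k))) ` Basis_lattice)"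

lemma lattice_inf_le:
  "bdd_below (range D) \<Longrightarrow> k \<in> Basis_lattice \<Longrightarrow> lattice_inf \<epsilon> D y \<le> D (\<epsilon> *\<^sub>R (y + k))"
  unfolding lattice_inf_def by (rule cInf_lower) (auto intro: bdd_below_mono)

lemma lattice_inf_greatest:
  "(\<And>k. k \<in> Basis_lattice \<Longrightarrow> m \<le> D (\<epsilon> *\<^sub>R (y + k))) \<Longrightarrow> m \<le> lattice_inf \<epsilon> D y"
  unfolding lattice_inf_def by (rule cInf_greatest) (auto intro: Basis_lattice.zero)

lemma lattice_inf_periodic: "Zn_periodic (lattice_inf \<epsilon> D)"
  unfolding Zn_periodic_def lattice_inf_def
proof (intro allI ballI)
  fix y b :: 'a assume "b \<in> Basis"
  have "(\<lambda>k. D (\<epsilon> *\<^sub>R (y + b + k))) ` Basis_lattice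
      = (\<lambda>k. D (\<epsilon> *\<^sub>R (y + k))) ` ((+) b ` Basis_lattice)"
    by (simp add: image_image add.assoc)
  then show "Inf ((\<lambda>k. D (\<epsilon> *\<^sub>R (y + b + k))) ` Basis_lattice) = Inf ((\<lambda>k. D (\<epsilon> *\<^sub>R (y + k))) ` Basis_lattice)"
    using Basis_lattice_translate[OF \<open>b \<in> Basis\<close>] by simp
qed

lemma lattice_inf_le_add:
  fixes D :: "'a::euclidean_space \<Rightarrow> real"
  assumes "bdd_below (range D)" and "\<And>k. D (\<epsilon> *\<^sub>R (x' + k)) \<le> D (\<epsilon> *\<^sub>R (x + k)) + e"
  shows "lattice_inf \<epsilon> D x' \<le> lattice_inf \<epsilon> D x + e"
proof -
  have "lattice_inf \<epsilon> D x' - e \<le> lattice_inf \<epsilon> D x"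
  proof (rule lattice_inf_greatest)
    fix k :: 'a assume "k \<in> Basis_lattice"
    then show "lattice_inf \<epsilon> D x' - e \<le> D (\<epsilon> *\<^sub>R (x + k))"
      using lattice_inf_le[OF assms(1), of k \<epsilon> x'] assms(2)[of k] by linarith
  qed
  then show ?thesis by simp
qed

lemma lattice_inf_continuous:
  assumes D: "uniformly_continuous_on UNIV D" "bdd_below (range D)" and eps: "\<epsilon> > 0"
  shows "continuous_on UNIV (lattice_inf \<epsilon> D)"
  unfolding continuous_on_iff
proof (intro ballI allI impI)
  fix x :: 'a and e :: real assume e: "e > 0"
  obtain d where d: "d > 0" "\<forall>x x'. dist x' x < d \<longrightarrow> dist (D x') (D x) < e/2"
    using D(1) e unfolding uniformly_continuous_on_def by (meson UNIV_I half_gt_zero)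
  show "\<exists>d>0. \<forall>x'\<in>UNIV. dist x' x < d \<longrightarrow> dist (lattice_inf \<epsilon> D x') (lattice_inf \<epsilon> D x) < e"
  proof (intro exI[of _ "d / \<epsilon>"] conjI ballI impI)
    fix x' assume "dist x' x < d / \<epsilon>"
    then have near: "dist (\<epsilon> *\<^sub>R (x' + k)) (\<epsilon> *\<^sub>R (x + k)) < d" for k
      using eps by (simp add: dist_norm pos_less_divide_eq mult.commute flip: scaleR_diff_right)
    have "D (\<epsilon> *\<^sub>R (x' + k)) \<le> D (\<epsilon> *\<^sub>R (x + k)) + e/2"
      "D (\<epsilon> *\<^sub>R (x + k)) \<le> D (\<epsilon> *\<^sub>R (x' + k)) + e/2" for k
      using d(2)[rule_format, OF near[of k]] unfolding dist_real_def by linarith+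
    then have "lattice_inf \<epsilon> D x' \<le> lattice_inf \<epsilon> D x + e/2" "lattice_inf \<epsilon> D x \<le> lattice_inf \<epsilon> D x' + e/2"
      by (blast intro: lattice_inf_le_add[OF D(2)])+
    then show "dist (lattice_inf \<epsilon> D x') (lattice_inf \<epsilon> D x) < e"
      using e by (simp add: dist_real_def abs_le_iff)
  qed (use d eps in auto)
qed

text \<open>A negative value of the infimum is attained: only finitely many lattice points bring
  \<open>\<epsilon> (y + k)\<close> into the support of \<open>D\<close>, and all other terms vanish.\<close>

lemma lattice_inf_attained:
  assumes eps: "\<epsilon> > 0" and supp: "\<forall>x. R \<le> norm x \<longrightarrow> D x = 0" and bdd: "bdd_below (range D)"
    and neg: "lattice_inf \<epsilon> D y < 0"
  obtains k where "k \<in> Basis_lattice" "D (\<epsilon> *\<^sub>R (y + k)) = lattice_inf \<epsilon> D y"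
proof -
  define K where "K = {k \<in> (Basis_lattice :: 'a set). norm k \<le> R / \<epsilon> + norm y}"
  define F where "F = (\<lambda>k. D (\<epsilon> *\<^sub>R (y + k))) ` K"
  have "finite F" unfolding F_def K_def by (intro finite_imageI finite_Basis_lattice_bounded)
  have zero_or_K: "D (\<epsilon> *\<^sub>R (y + k)) = 0 \<or> k \<in> K" if k: "k \<in> Basis_lattice" for k
  proof (cases "norm (\<epsilon> *\<^sub>R (y + k)) < R")
    case True
    then have "norm (y + k) < R / \<epsilon>" using eps by (simp add: pos_less_divide_eq mult.commute)
    moreover have "norm k \<le> norm (y + k) + norm y"
      using norm_triangle_ineq4[of "y + k" y] by simp
    ultimately show ?thesis using k by (auto simp: K_def)
  qed (use supp in auto)
  define m where "m = Min (insert 0 F)"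
  have "m \<le> lattice_inf \<epsilon> D y"
    by (rule lattice_inf_greatest) (use zero_or_K \<open>finite F\<close> in \<open>force simp: m_def F_def\<close>)
  moreover have "m \<in> insert 0 F" unfolding m_def by (rule Min_in) (use \<open>finite F\<close> in auto)
  ultimately obtain k where "k \<in> K" "m = D (\<epsilon> *\<^sub>R (y + k))" using neg by (auto simp: F_def)
  moreover have "k \<in> Basis_lattice" using \<open>k \<in> K\<close> by (simp add: K_def)
  ultimately show ?thesis
    using that lattice_inf_le[OF bdd, of k \<epsilon> y] \<open>m \<le> lattice_inf \<epsilon> D y\<close> by force
qed

lemma rescaled_mem_ball:
  fixes x y k :: "'a::real_normed_vector"
  assumes "\<epsilon> > 0" and "x \<in> ball (\<epsilon> *\<^sub>R (y + k)) (\<epsilon> * s)"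
  shows "(1/\<epsilon>) *\<^sub>R x + - k \<in> ball y s"
proof -
  have "y - ((1/\<epsilon>) *\<^sub>R x + - k) = (1/\<epsilon>) *\<^sub>R (\<epsilon> *\<^sub>R (y + k) - x)"
    using assms(1) by (simp add: algebra_simps)
  then show ?thesis
    using assms by (simp add: dist_norm pos_divide_less_eq mult.commute)
qed

text \<open>The rescaled test function \<open>\<phi>0 x + c \<phi> (x/\<epsilon> - k)\<close> touches \<open>u\<close> from below at
  \<open>\<epsilon> (x0 + k)\<close>; the factor \<open>\<epsilon>\<^sup>2 / c\<close> comes from the chain rule.\<close>

lemma laplacian_le_of_touching_rescaled:
  fixes u \<phi>0 \<phi> :: "'a::euclidean_space \<Rightarrow> real"
  assumes U: "open U" and u: "visc_super U 0 u" and \<phi>0: "Ck_on 2 U \<phi>0"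
    and c: "c > 0" and eps: "\<epsilon> > 0"
    and z0: "\<epsilon> *\<^sub>R (x0 + k) \<in> U" and L: "- laplacian \<phi>0 (\<epsilon> *\<^sub>R (x0 + k)) \<le> L"
    and r: "r > 0" and \<phi>: "Ck_on 2 (ball x0 r) \<phi>"
    and touch: "c * \<phi> x0 = u (\<epsilon> *\<^sub>R (x0 + k)) - \<phi>0 (\<epsilon> *\<^sub>R (x0 + k))"
    and below: "\<forall>y\<in>ball x0 r. \<epsilon> *\<^sub>R (y + k) \<in> U \<longrightarrow> c * \<phi> y \<le> u (\<epsilon> *\<^sub>R (y + k)) - \<phi>0 (\<epsilon> *\<^sub>R (y + k))"
  shows "laplacian \<phi> x0 \<le> \<epsilon>\<^sup>2 * L / c"
proof -
  define z0 where "z0 = \<epsilon> *\<^sub>R (x0 + k)"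
  have rescale_iff: "(1/\<epsilon>) *\<^sub>R x + - k = y \<longleftrightarrow> x = \<epsilon> *\<^sub>R (y + k)" for x y
    using eps by auto
  obtain \<rho> where \<rho>: "\<rho> > 0" "ball z0 \<rho> \<subseteq> U" using U z0 openE unfolding z0_def by blast
  define s where "s = min r (\<rho> / \<epsilon>)"
  have s: "0 < s" "s \<le> r" "\<epsilon> * s \<le> \<rho>"
    using r \<rho> eps by (auto simp: s_def min_def pos_le_divide_eq pos_divide_le_eq mult.commute)
  define S where "S = ball z0 (\<epsilon> * s)"
  have SU: "S \<subseteq> U" using \<rho> s by (auto simp: S_def)
  have cell_ball: "(1/\<epsilon>) *\<^sub>R x + - k \<in> ball x0 r" if "x \<in> S" for x
    using rescaled_mem_ball[OF eps that[unfolded S_def z0_def]] s by auto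
  define \<Phi> where "\<Phi> = (\<lambda>x. \<phi>0 x + c * \<phi> ((1/\<epsilon>) *\<^sub>R x + - k))"
  have "Ck_on 2 S \<Phi>"
    unfolding \<Phi>_def S_def
    by (rule Ck_on_affine_comb[OF open_ball Ck_on_subset[OF \<phi>0 SU[unfolded S_def]] \<phi>
          cell_ball[unfolded S_def]])
  moreover have "\<Phi> z0 = u z0"
    using touch rescale_iff[of z0 x0] by (simp add: \<Phi>_def z0_def)
  moreover have "\<forall>x\<in>S. \<Phi> x \<le> u x"
  proof
    fix x assume "x \<in> S"
    moreover have "\<epsilon> *\<^sub>R (((1/\<epsilon>) *\<^sub>R x + - k) + k) = x" using rescale_iff by metis
    ultimately show "\<Phi> x \<le> u x"
      using below cell_ball[OF \<open>x \<in> S\<close>] SU by (fastforce simp: \<Phi>_def)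
  qed
  ultimately have "laplacian \<Phi> z0 \<le> 0"
    using u z0 SU s eps unfolding visc_super_def S_def z0_def by (metis mult_pos_pos)
  moreover have "laplacian \<Phi> z0 = laplacian \<phi>0 z0 + c * (1/\<epsilon>)\<^sup>2 * laplacian \<phi> x0"
    using laplacian_affine_comb[OF open_ball Ck_on_subset[OF \<phi>0 SU[unfolded S_def]] \<phi>
        cell_ball[unfolded S_def], of z0 c] rescale_iff[of z0 x0] s eps by (simp add: \<Phi>_def z0_def)
  ultimately have "c * (1/\<epsilon>)\<^sup>2 * laplacian \<phi> x0 \<le> L"
    using L unfolding z0_def by linarith
  then have "\<epsilon>\<^sup>2 / c * (c * (1/\<epsilon>)\<^sup>2 * laplacian \<phi> x0) \<le> \<epsilon>\<^sup>2 / c * L"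
    by (rule mult_left_mono) (use c in simp_all)
  then show ?thesis using c eps by (simp add: field_simps)
qed

lemma laplacian_le_of_touching_lattice_inf:
  fixes u \<phi>0 \<phi> :: "'a::euclidean_space \<Rightarrow> real" and U :: "'a set" and c :: real
  defines "D \<equiv> min0_zero_ext U (\<lambda>x. (u x - \<phi>0 x) / c)"
  assumes U: "open U" "U \<subseteq> ball 0 R" and u: "visc_super U 0 u" and \<phi>0: "Ck_on 2 U \<phi>0"
    and L: "\<forall>x\<in>U. - laplacian \<phi>0 x \<le> L" and c: "c > 0" and eps: "\<epsilon> > 0"
    and bdd: "bdd_below (range D)" and neg: "lattice_inf \<epsilon> D x0 < 0"
    and r: "r > 0" and \<phi>: "Ck_on 2 (ball x0 r) \<phi>"
    and touch: "\<phi> x0 = lattice_inf \<epsilon> D x0" and below: "\<forall>y\<in>ball x0 r. \<phi> y \<le> lattice_inf \<epsilon> D y"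
  shows "laplacian \<phi> x0 \<le> \<epsilon>\<^sup>2 * L / c"
proof -
  have "\<forall>x. R \<le> norm x \<longrightarrow> D x = 0"
    using U(2) by (auto simp: D_def min0_zero_ext_def)
  then obtain k where k: "k \<in> Basis_lattice" "D (\<epsilon> *\<^sub>R (x0 + k)) = lattice_inf \<epsilon> D x0"
    using lattice_inf_attained[OF eps _ bdd neg] by blast
  then have z0: "\<epsilon> *\<^sub>R (x0 + k) \<in> U" "D (\<epsilon> *\<^sub>R (x0 + k)) = (u (\<epsilon> *\<^sub>R (x0 + k)) - \<phi>0 (\<epsilon> *\<^sub>R (x0 + k))) / c"
    using neg by (auto simp: D_def min0_zero_ext_def split: if_splits)
  show ?thesis
  proof (rule laplacian_le_of_touching_rescaled[OF U(1) u \<phi>0 c eps z0(1) _ r \<phi>])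
    show "- laplacian \<phi>0 (\<epsilon> *\<^sub>R (x0 + k)) \<le> L" using L z0(1) by blast
    show "c * \<phi> x0 = u (\<epsilon> *\<^sub>R (x0 + k)) - \<phi>0 (\<epsilon> *\<^sub>R (x0 + k))"
      using touch k(2) z0(2) c by (simp add: field_simps)
    show "\<forall>y\<in>ball x0 r. \<epsilon> *\<^sub>R (y + k) \<in> U \<longrightarrow> c * \<phi> y \<le> u (\<epsilon> *\<^sub>R (y + k)) - \<phi>0 (\<epsilon> *\<^sub>R (y + k))"
    proof (intro ballI impI)
      fix y assume "y \<in> ball x0 r" "\<epsilon> *\<^sub>R (y + k) \<in> U"
      then have "\<phi> y \<le> (u (\<epsilon> *\<^sub>R (y + k)) - \<phi>0 (\<epsilon> *\<^sub>R (y + k))) / c"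
        using below lattice_inf_le[OF bdd k(1), of \<epsilon> y] by (fastforce simp: D_def min0_zero_ext_def)
      then show "c * \<phi> y \<le> u (\<epsilon> *\<^sub>R (y + k)) - \<phi>0 (\<epsilon> *\<^sub>R (y + k))"
        using c by (simp add: pos_le_divide_eq mult.commute)
    qed
  qed
qed

lemma least_cell_nonpos:
  assumes "least_cell \<mu> \<psi> X" and "0 \<le> \<mu>" and "\<forall>x. \<psi> x \<le> 0"
  shows "X x \<le> 0"
proof -
  have "cell_adm \<mu> \<psi> (\<lambda>_. 0)"
    using assms(2,3) visc_super_const by (auto simp: cell_adm_def Zn_periodic_def)
  then show ?thesis using assms(1) unfolding least_cell_def by auto
qed

lemma least_cell_bdd_below:
  "least_cell \<mu> \<psi> X \<Longrightarrow> bdd_below (range \<psi>) \<Longrightarrow> bdd_below (range X)"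
  unfolding least_cell_def cell_adm_def bdd_below_def by (metis order_trans rangeE rangeI)

lemma least_cell_Inf_nonpos:
  assumes "least_cell \<mu> \<psi> X" and "0 \<le> \<mu>" and "bdd_below (range \<psi>)" and "\<forall>x. \<psi> x \<le> 0"
  shows "Inf (range X) \<le> 0"
  using cInf_lower[OF rangeI least_cell_bdd_below[OF assms(1,3)]] least_cell_nonpos[OF assms(1,2,4)]
  by (meson order_trans)

lemma min0_zero_ext_obstacle_gap:
  fixes U :: "'a::euclidean_space set" and \<phi>0 \<psi> u :: "'a \<Rightarrow> real" and c :: real
  defines "D \<equiv> min0_zero_ext U (\<lambda>x. (u x - \<phi>0 x) / c)"
  assumes U: "open U" "bounded U"
    and u: "obst_adm U (\<lambda>x. \<phi>0 x + c * \<psi> ((1/\<epsilon>) *\<^sub>R x)) u"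
    and \<phi>0: "continuous_on (closure U) \<phi>0" "\<forall>x\<in>frontier U. \<phi>0 x < 0"
    and \<psi>: "bdd_below (range \<psi>)" "\<forall>x. \<psi> x \<le> 0" and c: "c > 0"
  shows "\<psi> ((1/\<epsilon>) *\<^sub>R x) \<le> D x" and "bdd_below (range D)"
    and "uniformly_continuous_on UNIV D"
proof -
  show D_ge: "\<psi> ((1/\<epsilon>) *\<^sub>R x) \<le> D x" for x
    using u \<psi>(2) c by (auto simp: D_def min0_zero_ext_def obst_adm_def pos_le_divide_eq mult.commute)
  obtain B where "\<forall>x. B \<le> \<psi> x" using \<psi>(1) by (auto simp: bdd_below_def)
  then show "bdd_below (range D)"
    using D_ge by (intro bdd_belowI2[of _ B]) (meson order_trans)
  have "continuous_on (closure U) (\<lambda>x. (u x - \<phi>0 x) / c)" "\<forall>x\<in>frontier U. 0 < (u x - \<phi>0 x) / c"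
    using u \<phi>0 c by (fastforce simp: obst_adm_def intro!: continuous_intros divide_pos_pos)+
  then have "continuous_on UNIV D"
    unfolding D_def by (rule continuous_on_min0_zero_ext[OF U(1)])
  moreover obtain R where "U \<subseteq> ball 0 R" using bounded_subset_ballD[OF U(2)] by blast
  then have "\<forall>x. R \<le> norm x \<longrightarrow> D x = 0" by (auto simp: D_def min0_zero_ext_def)
  ultimately show "uniformly_continuous_on UNIV D"
    by (rule uniformly_continuous_on_bounded_support)
qed

lemma rescaled_least_cell_le_gap:
  fixes U :: "'a::euclidean_space set" and \<phi>0 \<psi> u X :: "'a \<Rightarrow> real"
  assumes U: "open U" "bounded U"
    and u: "obst_adm U (\<lambda>x. \<phi>0 x + c * \<psi> ((1/\<epsilon>) *\<^sub>R x)) u"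
    and \<phi>0: "Ck_on 2 U \<phi>0" "continuous_on (closure U) \<phi>0" "\<forall>x\<in>frontier U. \<phi>0 x < 0"
    and L: "\<forall>x\<in>U. - laplacian \<phi>0 x \<le> L" "0 \<le> L"
    and \<psi>: "Zn_periodic \<psi>" "bdd_below (range \<psi>)" "\<forall>x. \<psi> x \<le> 0"
    and c: "c > 0" and eps: "\<epsilon> > 0"
    and X: "least_cell (\<epsilon>\<^sup>2 * L / c) \<psi> X"
  shows "\<forall>x\<in>U. c * X ((1/\<epsilon>) *\<^sub>R x) \<le> u x - \<phi>0 x"
proof -
  let ?\<mu> = "\<epsilon>\<^sup>2 * L / c"
  define D where "D = min0_zero_ext U (\<lambda>x. (u x - \<phi>0 x) / c)"
  define I where "I = lattice_inf \<epsilon> D"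
  note D = min0_zero_ext_obstacle_gap[OF U u \<phi>0(2,3) \<psi>(2,3) c, folded D_def]
  have X_adm: "cell_adm ?\<mu> \<psi> X" using X by (simp add: least_cell_def)
  have I_ge: "\<psi> y \<le> I y" for y
    unfolding I_def
  proof (rule lattice_inf_greatest)
    fix k :: 'a assume "k \<in> Basis_lattice"
    then show "\<psi> y \<le> D (\<epsilon> *\<^sub>R (y + k))"
      using D(1)[of "\<epsilon> *\<^sub>R (y + k)"] Zn_periodic_Basis_lattice[OF \<psi>(1)] eps by simp
  qed
  obtain R where R: "U \<subseteq> ball 0 R" using bounded_subset_ballD[OF U(2)] by blast
  have min_visc: "visc_super UNIV ?\<mu> (\<lambda>y. min (X y) (I y))"
  proof (rule visc_super_min)
    show "visc_super UNIV ?\<mu> X" using X_adm by (simp add: cell_adm_def)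
    fix x0 \<phi> r assume "I x0 < X x0" "0 < r" "Ck_on 2 (ball x0 r) \<phi>"
      "\<phi> x0 = I x0" "\<forall>y\<in>ball x0 r. \<phi> y \<le> I y"
    moreover have "visc_super U 0 u" using u by (simp add: obst_adm_def)
    moreover have "X x0 \<le> 0" using least_cell_nonpos[OF X _ \<psi>(3)] L(2) c by simp
    ultimately show "laplacian \<phi> x0 \<le> ?\<mu>"
      using laplacian_le_of_touching_lattice_inf[OF U(1) R _ \<phi>0(1) L(1) c eps, of u x0 r \<phi>,
          folded D_def I_def] D(2) by simp
  qed
  have "cell_adm ?\<mu> \<psi> (\<lambda>y. min (X y) (I y))"
    using X_adm lattice_inf_periodic[of \<epsilon> D, folded I_def] min_visc I_ge
      lattice_inf_continuous[OF D(3,2) eps, folded I_def]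
    by (auto simp: cell_adm_def Zn_periodic_def intro!: continuous_intros)
  then have X_le_I: "X y \<le> I y" for y using X unfolding least_cell_def by (metis min.boundedE)
  show ?thesis
  proof
    fix x assume "x \<in> U"
    have "X ((1/\<epsilon>) *\<^sub>R x) \<le> D (\<epsilon> *\<^sub>R ((1/\<epsilon>) *\<^sub>R x + 0))"
      using X_le_I lattice_inf_le[OF D(2) Basis_lattice.zero] unfolding I_def by (meson order_trans)
    also have "\<dots> \<le> (u x - \<phi>0 x) / c" using \<open>x \<in> U\<close> eps by (simp add: D_def min0_zero_ext_def)
    finally show "c * X ((1/\<epsilon>) *\<^sub>R x) \<le> u x - \<phi>0 x"
      using c by (simp add: pos_le_divide_eq mult.commute)
  qed
qed

lemma least_obst_mono:
  assumes "least_obst U g v" and "least_obst U h w" and "\<forall>x\<in>U. g x \<le> h x"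
  shows "\<forall>x\<in>closure U. v x \<le> w x"
  using assms unfolding least_obst_def obst_adm_def by (meson order_trans)

lemma least_obst_le_add_const:
  assumes v: "least_obst U g v" and w: "obst_adm U h w" and C: "0 \<le> C"
    and above: "\<forall>x\<in>U. g x \<le> w x + C"
  shows "\<forall>x\<in>closure U. v x \<le> w x + C"
proof -
  have "obst_adm U g (\<lambda>x. w x + C)"
    using w C above visc_super_add_const by (auto simp: obst_adm_def intro!: continuous_intros)
  then show ?thesis using v unfolding least_obst_def by blast
qed

lemma least_obst_le_rescaled_obstacle:
  fixes U :: "'a::euclidean_space set" and \<phi>0 \<psi> u X :: "'a \<Rightarrow> real"
  assumes u0: "least_obst U \<phi>0 u0" and U: "open U" "bounded U"
    and u: "obst_adm U (\<lambda>x. \<phi>0 x + c * \<psi> ((1/\<epsilon>) *\<^sub>R x)) u"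
    and \<phi>0: "Ck_on 2 U \<phi>0" "continuous_on (closure U) \<phi>0" "\<forall>x\<in>frontier U. \<phi>0 x < 0"
    and L: "\<forall>x\<in>U. - laplacian \<phi>0 x \<le> L" "0 \<le> L"
    and \<psi>: "Zn_periodic \<psi>" "bdd_below (range \<psi>)" "\<forall>x. \<psi> x \<le> 0"
    and c: "c > 0" and eps: "\<epsilon> > 0"
    and X: "least_cell (\<epsilon>\<^sup>2 * L / c) \<psi> X"
  shows "\<forall>x\<in>closure U. u0 x \<le> u x + c * - Inf (range X)"
proof (rule least_obst_le_add_const[OF u0 u])
  show "0 \<le> c * - Inf (range X)"
    using least_cell_Inf_nonpos[OF X _ \<psi>(2,3)] c L(2) by (simp add: mult_le_0_iff)
  have "Inf (range X) \<le> X y" for y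
    using cInf_lower[OF rangeI least_cell_bdd_below[OF X \<psi>(2)]] .
  then have "c * Inf (range X) \<le> c * X ((1/\<epsilon>) *\<^sub>R y)" for y
    using c by simp
  then show "\<forall>y\<in>U. \<phi>0 y \<le> u y + c * - Inf (range X)"
    using rescaled_least_cell_le_gap[OF U u \<phi>0 L \<psi> c eps X] by (smt (verit) mult_minus_right)
qed

theorem proposition3p2:
  fixes U :: "'a::euclidean_space set"
    and \<phi>0 \<psi> u0 :: "'a \<Rightarrow> real"
    and u :: "real \<Rightarrow> 'a \<Rightarrow> real"
    and chi :: "real \<Rightarrow> 'a \<Rightarrow> real"
    and lam p :: real
  assumes U: "smooth_bounded_domain U"
    and phi0_C2: "Ck_on 2 U \<phi>0"
    and phi0_cont: "continuous_on (closure U) \<phi>0"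
    and phi0_pos: "\<exists>x\<in>U. \<phi>0 x > 0"
    and phi0_bdry: "\<forall>x\<in>frontier U. \<phi>0 x < 0"
    and lam: "0 < lam" "lam \<le> 1"
    and phi0_lap: "\<forall>x\<in>U. lam \<le> - laplacian \<phi>0 x \<and> - laplacian \<phi>0 x \<le> 1 / lam"
    and psi_smooth: "smooth_on UNIV \<psi>"
    and psi_per: "Zn_periodic \<psi>"
    and psi_bds: "\<forall>x. -1 \<le> \<psi> x \<and> \<psi> x \<le> 0"
    and u0: "least_obst U \<phi>0 u0"
    and ueps: "\<forall>\<epsilon>>0. least_obst U (\<lambda>x. \<phi>0 x + \<epsilon> powr p * \<psi> ((1 / \<epsilon>) *\<^sub>R x)) (u \<epsilon>)"
    and chi_least: "\<forall>\<mu>>0. least_cell \<mu> \<psi> (chi \<mu>)"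
  shows "\<forall>\<epsilon>>0. \<forall>x\<in>U.
     (let E = (\<lambda>\<mu>. - Inf (range (chi \<mu>)));
          r = sqrt (\<epsilon> powr p * E ((1 / lam) * \<epsilon> powr (2 - p)));
          w0 = u0 x - \<phi>0 x;
          we = u \<epsilon> x - \<phi>0 x
      in w0 - r\<^sup>2 \<le> we \<and> we \<le> w0)"
proof (intro allI impI ballI)
  fix \<epsilon> :: real and x :: 'a assume eps: "\<epsilon> > 0" and x: "x \<in> U"
  define c where "c = \<epsilon> powr p"
  define \<mu> where "\<mu> = (1 / lam) * \<epsilon> powr (2 - p)"
  have c: "c > 0" using eps by (simp add: c_def)
  have \<psi>: "bdd_below (range \<psi>)" "\<forall>x. \<psi> x \<le> 0" using psi_bds by (auto intro: bdd_belowI2)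
  have chi: "least_cell \<mu> \<psi> (chi \<mu>)" using chi_least eps lam by (simp add: \<mu>_def)
  moreover have "\<mu> = \<epsilon>\<^sup>2 * (1 / lam) / c" using eps by (simp add: \<mu>_def c_def powr_diff powr_numeral)
  ultimately have chi': "least_cell (\<epsilon>\<^sup>2 * (1 / lam) / c) \<psi> (chi \<mu>)" by simp
  have ue: "least_obst U (\<lambda>x. \<phi>0 x + c * \<psi> ((1/\<epsilon>) *\<^sub>R x)) (u \<epsilon>)" using ueps eps by (simp add: c_def)
  then have "\<forall>y\<in>closure U. u0 y \<le> u \<epsilon> y + c * - Inf (range (chi \<mu>))"
    using U phi0_lap lam(1)
    by (intro least_obst_le_rescaled_obstacle[OF u0 _ _ _ phi0_C2 phi0_cont phi0_bdry _ _ psi_per \<psi> c eps chi'])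
      (auto simp: smooth_bounded_domain_def least_obst_def)
  moreover have "\<forall>y\<in>closure U. u \<epsilon> y \<le> u0 y"
    using least_obst_mono[OF ue u0] c \<psi>(2) by (simp add: mult_nonneg_nonpos)
  moreover have "0 \<le> c * - Inf (range (chi \<mu>))"
    using least_cell_Inf_nonpos[OF chi _ \<psi>] c eps lam by (simp add: \<mu>_def mult_le_0_iff)
  ultimately show "let E = (\<lambda>\<mu>. - Inf (range (chi \<mu>)));
          r = sqrt (\<epsilon> powr p * E ((1 / lam) * \<epsilon> powr (2 - p)));
          w0 = u0 x - \<phi>0 x;
          we = u \<epsilon> x - \<phi>0 x
      in w0 - r\<^sup>2 \<le> we \<and> we \<le> w0"
    using x closure_subset by (force simp: Let_def \<mu>_def c_def)
qed

end
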